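(* Let $f$ be a nonzero real homogeneous polynomial of degree $p\ge1$ in $n$ variables. (a) If $f(x)=a(c^\top x)^p$ for some $c\in\mathbb R^n\setminus\{0\}$ and $a\ne0$, then $\|f^k\|_{HS}=\|f^k\|_\sigma=|a|^k\|c\|_2^{kp}$ for all $k\in\mathbb N$. (b) If $f$ is not of this form, then for all $k,l\in\mathbb N$: $\|f^{k+l}\|_{HS}<\|f^k\|_{HS}\|f^l\|_{HS}$, $\|f^{2k}\|_{HS}<\|f^k\|_{HS}^2$, and $\|f\|_\sigma^k<\|f^k\|_{HS}$. Moreover the limit $\rho_1(f):=\lim_{k\to\infty}\|f^k\|_{HS}^{1/k}$ exists, $\rho_1(f)\ge\|f\|_\sigma$, and $\rho_1(f)<\|f^k\|_{HS}^{1/k}$ for every $k\in\mathbb N$.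
   Context: Every real homogeneous polynomial $f$ of degree $p$ in $n$ variables is $f(x)=\langle\mathcal F,\otimes^p x\rangle$ for a unique symmetric tensor $\mathcal F\in\mathrm S^p\mathbb R^n$, where $\langle\cdot,\cdot\rangle$ is the entrywise (Hilbert–Schmidt) inner product of tensors and $\otimes^p x=x\otimes\cdots\otimes x$. Set $\|f\|_{HS}:=\|\mathcal F\|_{HS}=\sqrt{\langle\mathcal F,\mathcal F\rangle}$; equivalently, if $f(x)=\sum_{j_1+\cdots+j_n=p}\frac{p!}{j_1!\cdots j_n!}\phi_{j_1,\dots,j_n}x_1^{j_1}\cdots x_n^{j_n}$ then $\|f\|_{HS}^2=\sum\frac{p!}{j_1!\cdots j_n!}\phi_{j_1,\dots,j_n}^2$. Also $\|f\|_\sigma:=\max\{|f(x)|:x\in\mathbb R^n,\|x\|_2=1\}$. Powers $f^k$ are ordinary powers of polynomials. *)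

theory Defs
  imports "HOL-Analysis.Analysis" "HOL-Library.Poly_Mapping"
begin

text \<open>Real polynomials in variables indexed by a finite type 'n (i.e. R^n with n = CARD('n)):
  a finitely supported map from exponent vectors (monomials) to real coefficients.
  Multiplication (hence powers) is the convolution product of Poly_Mapping.\<close>
type_synonym 'n mpoly = "('n \<Rightarrow>\<^sub>0 nat) \<Rightarrow>\<^sub>0 real"

definition mdeg :: "('n::finite \<Rightarrow>\<^sub>0 nat) \<Rightarrow> nat" where
  "mdeg m = (\<Sum>i\<in>UNIV. Poly_Mapping.lookup m i)"

definition homogeneous :: "nat \<Rightarrow> 'n::finite mpoly \<Rightarrow> bool" where
  "homogeneous p f \<longleftrightarrow> (\<forall>m\<in>Poly_Mapping.keys f. mdeg m = p)"

definition meval :: "'n::finite mpoly \<Rightarrow> real^'n \<Rightarrow> real" where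
  "meval f x = (\<Sum>m\<in>Poly_Mapping.keys f. Poly_Mapping.lookup f m * (\<Prod>i\<in>UNIV. (x $ i) ^ Poly_Mapping.lookup m i))"

text \<open>Hilbert-Schmidt norm: writing the coefficient of x^j as (p!/(j_1!...j_n!)) phi_j,
  the squared norm is sum of (p!/(j_1!...j_n!)) phi_j^2, i.e. sum of coeff^2 * (prod j_i!) / p!.\<close>
definition hs_norm :: "'n::finite mpoly \<Rightarrow> real" where
  "hs_norm f = sqrt (\<Sum>m\<in>Poly_Mapping.keys f. (Poly_Mapping.lookup f m)\<^sup>2 * (\<Prod>i\<in>UNIV. fact (Poly_Mapping.lookup m i)) / fact (mdeg m))"

definition sigma_norm :: "'n::finite mpoly \<Rightarrow> real" where
  "sigma_norm f = Sup {\<bar>meval f x\<bar> | x. norm x = 1}"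

end

(* Writing a form g of degree d as g(x) = sum over |m| = d of multinomial(m) phi_m x^m, the squared
   Hilbert-Schmidt norm is sum multinomial(m) phi_m^2, and the tensor entries of f g are weighted means
   of the products phi_a psi_b over a + b = m, with weights multinomial(a) multinomial(b) whose sum is
   multinomial(m). The weighted Cauchy-Schwarz inequality thus gives ||f g|| <= ||f|| ||g||, with
   equality only if phi_a psi_b depends on a + b alone; this forces phi_a = beta c^a, i.e.
   f = beta (c.x)^p. If f^k is a power of a linear form then so is f, since f is then constant on
   every hyperplane c.x = t. Hence, unless f is a power of a linear form, k |-> ||f^k|| is strictly
   submultiplicative, and Fekete's lemma applied to log ||f^k|| yields the limit rho together with
   rho <= ||f^(2k)||^(1/2k) < ||f^k||^(1/k). Finally |f(x)|^k = |f^k(x)| <= ||f^k|| on the unit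
   sphere gives rho >= ||f||_sigma. *)

theory Submission
  imports Defs "HOL-Computational_Algebra.Polynomial"
begin

section \<open>Exponent vectors\<close>

definition unit_exp :: "'n \<Rightarrow> 'n \<Rightarrow>\<^sub>0 nat" where
  "unit_exp i = Poly_Mapping.single i 1"

definition exps_of_degree :: "nat \<Rightarrow> ('n::finite \<Rightarrow>\<^sub>0 nat) set" where
  "exps_of_degree d = {m. mdeg m = d}"

definition multipow :: "real^'n \<Rightarrow> ('n::finite \<Rightarrow>\<^sub>0 nat) \<Rightarrow> real" where
  "multipow x m = (\<Prod>i\<in>UNIV. (x $ i) ^ Poly_Mapping.lookup m i)"

definition mfact :: "('n::finite \<Rightarrow>\<^sub>0 nat) \<Rightarrow> real" where
  "mfact m = (\<Prod>i\<in>UNIV. fact (Poly_Mapping.lookup m i))"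

definition multinomial :: "('n::finite \<Rightarrow>\<^sub>0 nat) \<Rightarrow> real" where
  "multinomial m = fact (mdeg m) / mfact m"

lemma lookup_le_mdeg: "Poly_Mapping.lookup m i \<le> mdeg (m::'n::finite \<Rightarrow>\<^sub>0 nat)"
  unfolding mdeg_def by (rule member_le_sum) auto

lemma mdeg_add: "mdeg (a + b :: 'n::finite \<Rightarrow>\<^sub>0 nat) = mdeg a + mdeg b"
  unfolding mdeg_def by (simp add: lookup_add sum.distrib)

lemma mdeg_zero [simp]: "mdeg (0 :: 'n::finite \<Rightarrow>\<^sub>0 nat) = 0"
  unfolding mdeg_def by simp

lemma mdeg_eq_0_iff: "mdeg (m :: 'n::finite \<Rightarrow>\<^sub>0 nat) = 0 \<longleftrightarrow> m = 0"
proof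
  assume "mdeg m = 0"
  then have "\<forall>i. Poly_Mapping.lookup m i = 0" unfolding mdeg_def by simp
  then show "m = 0" by (intro poly_mapping_eqI) simp
qed simp

lemma mdeg_remove:
  "mdeg (a :: 'n::finite \<Rightarrow>\<^sub>0 nat) = Poly_Mapping.lookup a j + (\<Sum>i\<in>UNIV - {j}. Poly_Mapping.lookup a i)"
  unfolding mdeg_def by (rule sum.remove) auto

lemma lookup_unit_exp: "Poly_Mapping.lookup (unit_exp i) j = (if i = j then 1 else 0)"
  unfolding unit_exp_def by (simp add: lookup_single when_def)

lemma mdeg_unit_exp [simp]: "mdeg (unit_exp i :: 'n::finite \<Rightarrow>\<^sub>0 nat) = 1"
  unfolding mdeg_def lookup_unit_exp by simp

lemma minus_unit_exp_add: "1 \<le> Poly_Mapping.lookup m i \<Longrightarrow> m - unit_exp i + unit_exp i = m"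
  by (rule poly_mapping_eqI) (auto simp: lookup_add lookup_minus lookup_unit_exp)

lemma finite_exps_of_degree: "finite (exps_of_degree d :: ('n::finite \<Rightarrow>\<^sub>0 nat) set)"
proof -
  have "Poly_Mapping.lookup ` exps_of_degree d \<subseteq> PiE UNIV (\<lambda>_. {..d})"
    using lookup_le_mdeg unfolding exps_of_degree_def by (auto simp: PiE_def extensional_def)
  then have "finite (Poly_Mapping.lookup ` (exps_of_degree d :: ('n \<Rightarrow>\<^sub>0 nat) set))"
    by (rule finite_subset) (simp add: finite_PiE)
  then show ?thesis
    by (rule finite_imageD) (simp add: inj_on_def poly_mapping_eqI)
qed

lemma homogeneous_iff_keys: "homogeneous d f \<longleftrightarrow> Poly_Mapping.keys f \<subseteq> exps_of_degree d"
  unfolding homogeneous_def exps_of_degree_def by auto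

lemma mfact_pos: "mfact m > 0"
  unfolding mfact_def by (intro prod_pos) auto

lemma multinomial_pos: "multinomial m > 0"
  unfolding multinomial_def using mfact_pos by (auto intro!: divide_pos_pos)

lemma mfact_minus_unit_exp:
  assumes "1 \<le> Poly_Mapping.lookup m i"
  shows "mfact m = mfact (m - unit_exp i) * Poly_Mapping.lookup m i"
proof -
  let ?rest = "\<lambda>m'. \<Prod>j\<in>UNIV - {i}. fact (Poly_Mapping.lookup m' j) :: real"
  have split: "mfact m' = fact (Poly_Mapping.lookup m' i) * ?rest m'" for m'
    unfolding mfact_def by (rule prod.remove) auto
  have "?rest (m - unit_exp i) = ?rest m"
    by (intro prod.cong refl) (auto simp: lookup_minus lookup_unit_exp)
  moreover have "(fact (Poly_Mapping.lookup m i) :: real) =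
      Poly_Mapping.lookup m i * fact (Poly_Mapping.lookup m i - 1)"
    using assms by (simp add: fact_reduce)
  ultimately show ?thesis
    unfolding split[of m] split[of "m - unit_exp i"] by (simp add: lookup_minus lookup_unit_exp)
qed

lemma multipow_add: "multipow x (a + b) = multipow x a * multipow x b"
  unfolding multipow_def by (simp add: lookup_add power_add prod.distrib)

lemma multipow_zero [simp]: "multipow x 0 = 1"
  unfolding multipow_def by simp

lemma multipow_single: "multipow x (Poly_Mapping.single i k) = (x $ i) ^ k"
proof -
  have "multipow x (Poly_Mapping.single i k) = (\<Prod>j\<in>UNIV. if i = j then (x $ i) ^ k else 1)"
    unfolding multipow_def by (intro prod.cong refl) (simp add: lookup_single when_def)
  then show ?thesis by simp
qed

lemma multipow_unit_exp [simp]: "multipow x (unit_exp i) = x $ i"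
  unfolding unit_exp_def multipow_single by simp

lemma multipow_scaleR: "multipow (r *\<^sub>R x) m = r ^ mdeg m * multipow x m"
  unfolding multipow_def mdeg_def by (simp add: power_mult_distrib prod.distrib power_sum)

lemma multipow_ones [simp]: "multipow 1 m = 1"
  unfolding multipow_def by simp

section \<open>Evaluation\<close>

lemma meval_eq_sum:
  assumes "finite K" "Poly_Mapping.keys f \<subseteq> K"
  shows "meval f x = (\<Sum>m\<in>K. Poly_Mapping.lookup f m * multipow x m)"
  unfolding meval_def multipow_def[symmetric]
  by (rule sum.mono_neutral_left) (use assms in \<open>auto simp: in_keys_iff\<close>)

lemma meval_eq_sum_degree:
  "homogeneous d f \<Longrightarrow> meval f x = (\<Sum>m\<in>exps_of_degree d. Poly_Mapping.lookup f m * multipow x m)"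
  by (rule meval_eq_sum) (auto simp: finite_exps_of_degree homogeneous_iff_keys)

lemma lookup_mult_eq_sum:
  fixes f g :: "'a::comm_monoid_add \<Rightarrow>\<^sub>0 real"
  assumes "finite A" "finite B" "Poly_Mapping.keys f \<subseteq> A" "Poly_Mapping.keys g \<subseteq> B"
  shows "Poly_Mapping.lookup (f * g) k =
    (\<Sum>a\<in>A. \<Sum>b\<in>B. if a + b = k then Poly_Mapping.lookup f a * Poly_Mapping.lookup g b else 0)"
proof -
  have inner: "Sum_any (\<lambda>b. Poly_Mapping.lookup g b when k = a + b) =
      (\<Sum>b\<in>B. Poly_Mapping.lookup g b when k = a + b)" for a
    by (rule Sum_any.expand_superset) (use assms in \<open>auto simp: in_keys_iff\<close>)
  have outer: "Sum_any (\<lambda>a. Poly_Mapping.lookup f a * Sum_any (\<lambda>b. Poly_Mapping.lookup g b when k = a + b)) =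
      (\<Sum>a\<in>A. Poly_Mapping.lookup f a * Sum_any (\<lambda>b. Poly_Mapping.lookup g b when k = a + b))"
    by (rule Sum_any.expand_superset) (use assms in \<open>auto simp: in_keys_iff\<close>)
  have "Poly_Mapping.lookup f a * (Poly_Mapping.lookup g b when k = a + b) =
      (if a + b = k then Poly_Mapping.lookup f a * Poly_Mapping.lookup g b else 0)" for a b
    by (auto simp: when_def)
  then show ?thesis
    by (simp only: lookup_mult outer) (simp only: inner sum_distrib_left)
qed

lemma meval_mult: "meval (f * g) x = meval f x * meval g x"
proof -
  let ?A = "Poly_Mapping.keys f" and ?B = "Poly_Mapping.keys g"
  let ?K = "(\<lambda>(a, b). a + b) ` (?A \<times> ?B)"
  have "meval (f * g) x = (\<Sum>m\<in>?K. Poly_Mapping.lookup (f * g) m * multipow x m)"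
    by (rule meval_eq_sum) (use keys_mult[of f g] in auto)
  also have "\<dots> = (\<Sum>m\<in>?K. \<Sum>a\<in>?A. \<Sum>b\<in>?B.
      if a + b = m then Poly_Mapping.lookup f a * Poly_Mapping.lookup g b * multipow x m else 0)"
    by (simp add: lookup_mult_eq_sum[of ?A ?B] sum_distrib_right if_distrib[of "\<lambda>y. y * _"] cong: if_cong)
  also have "\<dots> = (\<Sum>a\<in>?A. \<Sum>b\<in>?B. \<Sum>m\<in>?K.
      if a + b = m then Poly_Mapping.lookup f a * Poly_Mapping.lookup g b * multipow x m else 0)"
    by (subst sum.swap) (simp add: sum.swap[of _ ?B ?K])
  also have "\<dots> = (\<Sum>a\<in>?A. \<Sum>b\<in>?B.
      Poly_Mapping.lookup f a * multipow x a * (Poly_Mapping.lookup g b * multipow x b))"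
    by (intro sum.cong refl) (auto simp: sum.delta multipow_add)
  also have "\<dots> = meval f x * meval g x"
    unfolding meval_def multipow_def[symmetric] by (simp add: sum_product)
  finally show ?thesis .
qed

lemma meval_single: "meval (Poly_Mapping.single k r) x = r * multipow x k"
  using meval_eq_sum[of "{k}" "Poly_Mapping.single k r" x] by simp

lemma meval_one: "meval 1 x = 1"
  using meval_single[of 0 1 x] by simp

lemma meval_power: "meval (f ^ k) x = meval f x ^ k"
  by (induction k) (simp_all add: meval_one meval_mult)

lemma meval_add: "meval (f + g) x = meval f x + meval g x"
proof -
  let ?K = "Poly_Mapping.keys f \<union> Poly_Mapping.keys g"
  have "meval (f + g) x = (\<Sum>m\<in>?K. Poly_Mapping.lookup (f + g) m * multipow x m)"
    by (rule meval_eq_sum) (auto simp: in_keys_iff lookup_add)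
  also have "\<dots> = (\<Sum>m\<in>?K. Poly_Mapping.lookup f m * multipow x m) + (\<Sum>m\<in>?K. Poly_Mapping.lookup g m * multipow x m)"
    by (simp add: lookup_add distrib_right sum.distrib)
  also have "\<dots> = meval f x + meval g x"
    by (simp add: meval_eq_sum[symmetric])
  finally show ?thesis .
qed

lemma meval_zero: "meval 0 x = 0"
  unfolding meval_def by simp

lemma meval_sum: "meval (\<Sum>i\<in>I. F i) x = (\<Sum>i\<in>I. meval (F i) x)"
  by (induction I rule: infinite_finite_induct) (simp_all add: meval_zero meval_add)

lemma meval_diff: "meval (f - g) x = meval f x - meval g x"
  using meval_add[of "f - g" g x] by simp

lemma meval_scaleR:
  assumes "homogeneous d g"
  shows "meval g (r *\<^sub>R x) = r ^ d * meval g x"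
  unfolding meval_eq_sum_degree[OF assms] multipow_scaleR
  by (simp add: sum_distrib_left exps_of_degree_def algebra_simps)

lemma homogeneous_mult:
  assumes "homogeneous p f" "homogeneous q g"
  shows "homogeneous (p + q) (f * g)"
  unfolding homogeneous_def
proof
  fix m assume "m \<in> Poly_Mapping.keys (f * g)"
  then obtain a b where "m = a + b" "a \<in> Poly_Mapping.keys f" "b \<in> Poly_Mapping.keys g"
    using keys_mult[of f g] by blast
  then show "mdeg m = p + q" using assms unfolding homogeneous_def by (simp add: mdeg_add)
qed

lemma homogeneous_power: "homogeneous p f \<Longrightarrow> homogeneous (k * p) (f ^ k)"
proof (induction k)
  case 0
  then show ?case by (auto simp: homogeneous_def in_keys_iff lookup_one when_def)
next
  case (Suc k)
  then show ?case using homogeneous_mult[of p f "k * p" "f ^ k"] by simp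
qed

lemma base_digits_inj:
  fixes d d' :: "nat \<Rightarrow> nat"
  assumes "\<forall>j<n. d j < N" "\<forall>j<n. d' j < N" "(\<Sum>j<n. d j * N ^ j) = (\<Sum>j<n. d' j * N ^ j)"
  shows "\<forall>j<n. d j = d' j"
  using assms
proof (induction n arbitrary: d d')
  case 0
  then show ?case by simp
next
  case (Suc n)
  have split: "(\<Sum>j<Suc n. e j * N ^ j) = e 0 + N * (\<Sum>j<n. e (Suc j) * N ^ j)" for e
    unfolding sum.lessThan_Suc_shift by (simp add: sum_distrib_left mult.left_commute)
  have d0: "d 0 < N" "d' 0 < N" using Suc.prems by auto
  let ?s = "\<Sum>j<n. d (Suc j) * N ^ j" and ?s' = "\<Sum>j<n. d' (Suc j) * N ^ j"
  from Suc.prems(3) have eq: "d 0 + N * ?s = d' 0 + N * ?s'" by (simp only: split)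
  then have "(d 0 + N * ?s) mod N = (d' 0 + N * ?s') mod N" by simp
  then have e0: "d 0 = d' 0" using d0 by simp
  with eq d0 have "?s = ?s'" by simp
  then have "\<forall>j<n. d (Suc j) = d' (Suc j)"
    using Suc.prems(1,2) by (intro Suc.IH) auto
  then show ?case using e0 by (auto simp: less_Suc_eq_0_disj)
qed

lemma exps_base_encoding_inj:
  fixes h :: "'n::finite \<Rightarrow> nat" and N :: nat
  assumes h: "bij_betw h UNIV {0..<CARD('n)}"
    and bound: "\<And>m i. m \<in> K \<Longrightarrow> Poly_Mapping.lookup m i < N"
  shows "inj_on (\<lambda>m. \<Sum>i\<in>UNIV. Poly_Mapping.lookup m i * N ^ h i) K"
proof
  fix m m' assume mm: "m \<in> K" "m' \<in> K"
    and eq: "(\<Sum>i\<in>UNIV. Poly_Mapping.lookup m i * N ^ h i) = (\<Sum>i\<in>UNIV. Poly_Mapping.lookup m' i * N ^ h i)"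
  define hi where "hi = inv_into UNIV h"
  have hih: "hi (h i) = i" for i
    unfolding hi_def using h by (simp add: bij_betw_def inv_into_f_f)
  have digits: "(\<Sum>i\<in>UNIV. Poly_Mapping.lookup u i * N ^ h i) = (\<Sum>j<CARD('n). Poly_Mapping.lookup u (hi j) * N ^ j)"
    for u :: "'n \<Rightarrow>\<^sub>0 nat"
  proof -
    have "(\<Sum>i\<in>UNIV. Poly_Mapping.lookup u i * N ^ h i) = (\<Sum>i\<in>UNIV. (\<lambda>j. Poly_Mapping.lookup u (hi j) * N ^ j) (h i))"
      by (simp add: hih)
    also have "\<dots> = (\<Sum>j\<in>{0..<CARD('n)}. Poly_Mapping.lookup u (hi j) * N ^ j)"
      by (rule sum.reindex_bij_betw[OF h])
    finally show ?thesis by (simp add: atLeast0LessThan)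
  qed
  have "\<forall>j<CARD('n). Poly_Mapping.lookup m (hi j) = Poly_Mapping.lookup m' (hi j)"
    using eq mm bound by (intro base_digits_inj) (auto simp: digits)
  moreover have "h i < CARD('n)" for i
    using h by (auto simp: bij_betw_def)
  ultimately show "m = m'"
    by (metis hih poly_mapping_eqI)
qed

text \<open>Kronecker substitution \<open>x\<^sub>i = t ^ N ^ h i\<close> turns \<open>g\<close> into a univariate polynomial
  whose coefficients are those of \<open>g\<close>.\<close>
lemma meval_all_0_imp_0:
  fixes g :: "'n::finite mpoly"
  assumes "\<And>x. meval g x = 0"
  shows "g = 0"
proof (rule ccontr)
  assume "g \<noteq> 0"
  let ?K = "Poly_Mapping.keys g"
  obtain m0 where m0: "m0 \<in> ?K" using \<open>g \<noteq> 0\<close> keys_eq_empty by blast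
  define N where "N = Suc (Max (mdeg ` ?K))"
  have bound: "Poly_Mapping.lookup m i < N" if "m \<in> ?K" for m i
  proof -
    have "mdeg m \<le> Max (mdeg ` ?K)" using that by (intro Max_ge) auto
    then show ?thesis using lookup_le_mdeg[of m i] unfolding N_def by simp
  qed
  obtain h :: "'n \<Rightarrow> nat" where h: "bij_betw h UNIV {0..<CARD('n)}"
    using ex_bij_betw_finite_nat[of "UNIV::'n set"] by auto
  define e where "e m = (\<Sum>i\<in>UNIV. Poly_Mapping.lookup m i * N ^ h i)" for m :: "'n \<Rightarrow>\<^sub>0 nat"
  have e_inj: "inj_on e ?K"
    unfolding e_def using h bound by (rule exps_base_encoding_inj)
  define P where "P = (\<Sum>m\<in>?K. monom (Poly_Mapping.lookup g m) (e m))"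
  have "poly P t = meval g (\<chi> i. t ^ (N ^ h i))" for t
  proof -
    have "multipow (\<chi> i. t ^ (N ^ h i)) m = t ^ e m" for m
      unfolding multipow_def e_def power_sum by (simp add: power_mult[symmetric] mult.commute)
    then show ?thesis
      unfolding P_def meval_def multipow_def[symmetric] by (simp add: poly_sum poly_monom)
  qed
  then have "P = 0" using assms poly_all_0_iff_0 by auto
  then have "0 = coeff P (e m0)" by simp
  also have "\<dots> = (\<Sum>m\<in>?K. if m = m0 then Poly_Mapping.lookup g m else 0)"
    unfolding P_def coeff_sum coeff_monom
    by (intro sum.cong refl) (use e_inj m0 in \<open>auto dest: inj_onD\<close>)
  also have "\<dots> = Poly_Mapping.lookup g m0"
    using m0 by simp
  finally show False using m0 by (simp add: in_keys_iff)
qed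

lemma meval_inj:
  fixes f g :: "'n::finite mpoly"
  assumes "\<And>x. meval f x = meval g x"
  shows "f = g"
  using meval_all_0_imp_0[of "f - g"] assms by (simp add: meval_diff)

section \<open>Powers of a linear form\<close>

definition linear_poly :: "real^'n \<Rightarrow> 'n::finite mpoly" where
  "linear_poly c = (\<Sum>i\<in>UNIV. Poly_Mapping.single (unit_exp i) (c $ i))"

lemma meval_linear_poly: "meval (linear_poly c) x = c \<bullet> x"
  unfolding linear_poly_def meval_sum meval_single inner_vec_def by simp

lemma add_eq_poly_mapping_iff:
  "k + b = (m::'a \<Rightarrow>\<^sub>0 nat) \<longleftrightarrow> b = m - k \<and> (\<forall>i. Poly_Mapping.lookup k i \<le> Poly_Mapping.lookup m i)"
proof
  assume "k + b = m"
  then show "b = m - k \<and> (\<forall>i. Poly_Mapping.lookup k i \<le> Poly_Mapping.lookup m i)"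
    by (auto simp: lookup_add lookup_minus intro!: poly_mapping_eqI)
qed (auto simp: lookup_add lookup_minus intro!: poly_mapping_eqI)

lemma lookup_single_mult:
  fixes g :: "'a mpoly"
  shows "Poly_Mapping.lookup (Poly_Mapping.single k r * g) m =
    (if \<forall>i. Poly_Mapping.lookup k i \<le> Poly_Mapping.lookup m i then r * Poly_Mapping.lookup g (m - k) else 0)"
proof -
  have "Poly_Mapping.lookup (Poly_Mapping.single k r * g) m =
      (\<Sum>b\<in>Poly_Mapping.keys g. if k + b = m then r * Poly_Mapping.lookup g b else 0)"
    by (subst lookup_mult_eq_sum[of "{k}" "Poly_Mapping.keys g"]) (auto simp: lookup_single when_def cong: if_cong)
  also have "\<dots> = (\<Sum>b\<in>Poly_Mapping.keys g.
      if b = m - k \<and> (\<forall>i. Poly_Mapping.lookup k i \<le> Poly_Mapping.lookup m i) then r * Poly_Mapping.lookup g b else 0)"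
    by (simp only: add_eq_poly_mapping_iff)
  finally show ?thesis
    by (cases "\<forall>i. Poly_Mapping.lookup k i \<le> Poly_Mapping.lookup m i") (auto simp: sum.delta' in_keys_iff)
qed

lemma lookup_linear_poly_mult:
  "Poly_Mapping.lookup (linear_poly c * g) m =
    (\<Sum>i\<in>UNIV. if 1 \<le> Poly_Mapping.lookup m i then c $ i * Poly_Mapping.lookup g (m - unit_exp i) else 0)"
proof -
  have "(\<forall>j. Poly_Mapping.lookup (unit_exp i) j \<le> Poly_Mapping.lookup m j) \<longleftrightarrow> 1 \<le> Poly_Mapping.lookup m i" for i
    by (auto simp: lookup_unit_exp)
  then show ?thesis
    unfolding linear_poly_def sum_distrib_right lookup_sum lookup_single_mult by simp
qed

lemma lookup_linear_poly_power:
  "Poly_Mapping.lookup (linear_poly c ^ d) m = (if mdeg m = d then multinomial m * multipow c m else 0)"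
proof (induction d arbitrary: m)
  case 0
  show ?case by (auto simp: lookup_one when_def mdeg_eq_0_iff multinomial_def mfact_def)
next
  case (Suc d)
  have "Poly_Mapping.lookup (linear_poly c * linear_poly c ^ d) m =
      (\<Sum>i\<in>UNIV. if mdeg m = Suc d then Poly_Mapping.lookup m i * (fact d / mfact m * multipow c m) else 0)"
    unfolding lookup_linear_poly_mult
  proof (intro sum.cong refl)
    fix i
    show "(if 1 \<le> Poly_Mapping.lookup m i then c $ i * Poly_Mapping.lookup (linear_poly c ^ d) (m - unit_exp i) else 0) =
        (if mdeg m = Suc d then Poly_Mapping.lookup m i * (fact d / mfact m * multipow c m) else 0)"
    proof (cases "1 \<le> Poly_Mapping.lookup m i")
      case True
      have m: "m = m - unit_exp i + unit_exp i" using minus_unit_exp_add[OF True] by simp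
      have deg: "mdeg m = mdeg (m - unit_exp i) + 1" by (subst m) (simp add: mdeg_add)
      have "multipow c m = c $ i * multipow c (m - unit_exp i)"
        by (subst m) (simp add: multipow_add)
      then show ?thesis
        using True deg mfact_minus_unit_exp[OF True] mfact_pos[of "m - unit_exp i"]
        by (auto simp: Suc.IH multinomial_def field_simps)
    qed simp
  qed
  also have "\<dots> = (if mdeg m = Suc d then multinomial m * multipow c m else 0)"
  proof (cases "mdeg m = Suc d")
    case True
    have "(\<Sum>i\<in>UNIV. Poly_Mapping.lookup m i * (fact d / mfact m * multipow c m)) =
        real (mdeg m) * (fact d / mfact m * multipow c m)"
      by (simp only: mdeg_def of_nat_sum sum_distrib_right)
    then show ?thesis using True mfact_pos[of m] by (simp add: multinomial_def field_simps)
  qed simp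
  finally show ?case by simp
qed

lemma homogeneous_linear_poly_power: "homogeneous d (linear_poly c ^ d)"
  by (auto simp: homogeneous_def in_keys_iff lookup_linear_poly_power split: if_splits)

theorem multinomial_theorem:
  "(\<Sum>m\<in>exps_of_degree d. multinomial m * multipow c m * multipow x m) = (c \<bullet> x) ^ d"
proof -
  have "(c \<bullet> x) ^ d = meval (linear_poly c ^ d) x"
    by (simp add: meval_power meval_linear_poly)
  also have "\<dots> = (\<Sum>m\<in>exps_of_degree d. multinomial m * multipow c m * multipow x m)"
    by (simp add: meval_eq_sum_degree[OF homogeneous_linear_poly_power] lookup_linear_poly_power exps_of_degree_def)
  finally show ?thesis ..
qed

definition splittings :: "nat \<Rightarrow> nat \<Rightarrow> ('n::finite \<Rightarrow>\<^sub>0 nat) \<Rightarrow> (('n \<Rightarrow>\<^sub>0 nat) \<times> ('n \<Rightarrow>\<^sub>0 nat)) set" where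
  "splittings p q m = {s \<in> exps_of_degree p \<times> exps_of_degree q. fst s + snd s = m}"

lemma finite_splittings: "finite (splittings p q m)"
  unfolding splittings_def
  by (rule finite_subset[of _ "exps_of_degree p \<times> exps_of_degree q"]) (auto simp: finite_exps_of_degree)

lemma lookup_mult_splittings:
  fixes f g :: "'n::finite mpoly"
  assumes "homogeneous p f" "homogeneous q g"
  shows "Poly_Mapping.lookup (f * g) m =
    (\<Sum>(a, b)\<in>splittings p q m. Poly_Mapping.lookup f a * Poly_Mapping.lookup g b)"
proof -
  have "Poly_Mapping.lookup (f * g) m = (\<Sum>(a, b)\<in>exps_of_degree p \<times> exps_of_degree q.
      if a + b = m then Poly_Mapping.lookup f a * Poly_Mapping.lookup g b else 0)"
    unfolding sum.cartesian_product[symmetric]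
    by (rule lookup_mult_eq_sum) (use assms in \<open>auto simp: finite_exps_of_degree homogeneous_iff_keys\<close>)
  also have "\<dots> = (\<Sum>(a, b)\<in>splittings p q m. Poly_Mapping.lookup f a * Poly_Mapping.lookup g b)"
    unfolding splittings_def by (rule sum.mono_neutral_cong_right) (auto simp: finite_exps_of_degree split: if_splits)
  finally show ?thesis .
qed

lemma multinomial_convolution:
  assumes "mdeg (m :: 'n::finite \<Rightarrow>\<^sub>0 nat) = p + q"
  shows "multinomial m = (\<Sum>(a, b)\<in>splittings p q m. multinomial a * multinomial b)"
proof -
  have "multinomial m = Poly_Mapping.lookup (linear_poly 1 ^ p * linear_poly 1 ^ q :: 'n mpoly) m"
    using assms by (simp add: lookup_linear_poly_power flip: power_add)
  also have "\<dots> = (\<Sum>(a, b)\<in>splittings p q m. multinomial a * multinomial b)"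
    unfolding lookup_mult_splittings[OF homogeneous_linear_poly_power homogeneous_linear_poly_power]
    by (intro sum.cong refl) (auto simp: splittings_def exps_of_degree_def lookup_linear_poly_power)
  finally show ?thesis .
qed

section \<open>The Hilbert--Schmidt norm of a product\<close>

definition tensor_coeff :: "'n::finite mpoly \<Rightarrow> ('n \<Rightarrow>\<^sub>0 nat) \<Rightarrow> real" where
  "tensor_coeff g m = Poly_Mapping.lookup g m / multinomial m"

lemma lookup_eq_tensor_coeff: "Poly_Mapping.lookup g m = multinomial m * tensor_coeff g m"
  unfolding tensor_coeff_def using multinomial_pos[of m] by simp

lemma hs_norm_nonneg: "hs_norm g \<ge> 0"
  unfolding hs_norm_def
  by (intro real_sqrt_ge_zero sum_nonneg divide_nonneg_nonneg mult_nonneg_nonneg prod_nonneg) auto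

lemma hs_norm_sq:
  assumes "homogeneous d g"
  shows "(hs_norm g)\<^sup>2 = (\<Sum>m\<in>exps_of_degree d. multinomial m * (tensor_coeff g m)\<^sup>2)"
proof -
  have "(\<Sum>m\<in>Poly_Mapping.keys g. (Poly_Mapping.lookup g m)\<^sup>2 * (\<Prod>i\<in>UNIV. fact (Poly_Mapping.lookup m i)) / fact (mdeg m))
      = (\<Sum>m\<in>Poly_Mapping.keys g. multinomial m * (tensor_coeff g m)\<^sup>2)"
    using mfact_pos by (intro sum.cong refl) (simp add: tensor_coeff_def multinomial_def mfact_def power2_eq_square)
  also have "\<dots> = (\<Sum>m\<in>exps_of_degree d. multinomial m * (tensor_coeff g m)\<^sup>2)"
    by (rule sum.mono_neutral_left)
      (use assms in \<open>auto simp: finite_exps_of_degree homogeneous_iff_keys in_keys_iff tensor_coeff_def\<close>)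
  moreover have "0 \<le> (\<Sum>m\<in>exps_of_degree d. multinomial m * (tensor_coeff g m)\<^sup>2)"
    by (intro sum_nonneg mult_nonneg_nonneg) (auto simp: less_imp_le[OF multinomial_pos])
  ultimately show ?thesis
    unfolding hs_norm_def by simp
qed

lemma weighted_Lagrange_identity:
  fixes W t :: "'a \<Rightarrow> real"
  shows "(\<Sum>s\<in>S. \<Sum>s'\<in>S. W s * W s' * (t s - t s')\<^sup>2) =
    2 * ((\<Sum>s\<in>S. W s) * (\<Sum>s\<in>S. W s * (t s)\<^sup>2) - (\<Sum>s\<in>S. W s * t s)\<^sup>2)"
proof -
  have e: "W s * W s' * (t s - t s')\<^sup>2 =
      W s * (t s)\<^sup>2 * W s' + W s * (W s' * (t s')\<^sup>2) - (2 * (W s * t s)) * (W s' * t s')" for s s'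
    by (simp add: power2_eq_square algebra_simps)
  have "(\<Sum>s\<in>S. \<Sum>s'\<in>S. W s * W s' * (t s - t s')\<^sup>2) =
      (\<Sum>s\<in>S. \<Sum>s'\<in>S. W s * (t s)\<^sup>2 * W s') + (\<Sum>s\<in>S. \<Sum>s'\<in>S. W s * (W s' * (t s')\<^sup>2))
      - (\<Sum>s\<in>S. \<Sum>s'\<in>S. (2 * (W s * t s)) * (W s' * t s'))"
    by (simp only: e sum.distrib sum_subtractf)
  also have "\<dots> = (\<Sum>s\<in>S. W s * (t s)\<^sup>2) * (\<Sum>s\<in>S. W s) + (\<Sum>s\<in>S. W s) * (\<Sum>s\<in>S. W s * (t s)\<^sup>2)
      - (\<Sum>s\<in>S. 2 * (W s * t s)) * (\<Sum>s\<in>S. W s * t s)"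
    by (simp only: sum_product)
  also have "(\<Sum>s\<in>S. 2 * (W s * t s)) = 2 * (\<Sum>s\<in>S. W s * t s)"
    by (simp add: sum_distrib_left)
  finally show ?thesis
    by (simp add: power2_eq_square algebra_simps)
qed

lemma weighted_Cauchy_Schwarz:
  fixes W t :: "'a \<Rightarrow> real"
  assumes "\<And>s. s \<in> S \<Longrightarrow> W s \<ge> 0"
  shows "(\<Sum>s\<in>S. W s * t s)\<^sup>2 \<le> (\<Sum>s\<in>S. W s) * (\<Sum>s\<in>S. W s * (t s)\<^sup>2)"
proof -
  have "0 \<le> (\<Sum>s\<in>S. \<Sum>s'\<in>S. W s * W s' * (t s - t s')\<^sup>2)"
    using assms by (intro sum_nonneg) auto
  then show ?thesis unfolding weighted_Lagrange_identity by simp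
qed

lemma weighted_Cauchy_Schwarz_eq_imp_const:
  fixes W t :: "'a \<Rightarrow> real"
  assumes "finite S" and W_pos: "\<And>s. s \<in> S \<Longrightarrow> W s > 0"
    and eq: "(\<Sum>s\<in>S. W s * t s)\<^sup>2 = (\<Sum>s\<in>S. W s) * (\<Sum>s\<in>S. W s * (t s)\<^sup>2)"
    and "s \<in> S" "s' \<in> S"
  shows "t s = t s'"
proof -
  have nonneg: "0 \<le> W u * W u' * (t u - t u')\<^sup>2" if "u \<in> S" "u' \<in> S" for u u'
    using W_pos that by (simp add: less_imp_le)
  have "(\<Sum>u\<in>S. \<Sum>u'\<in>S. W u * W u' * (t u - t u')\<^sup>2) = 0"
    unfolding weighted_Lagrange_identity eq by simp
  then have "\<forall>u\<in>S. \<forall>u'\<in>S. W u * W u' * (t u - t u')\<^sup>2 = 0"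
    using \<open>finite S\<close> nonneg by (simp add: sum_nonneg_eq_0_iff sum_nonneg)
  then have "W s * W s' * (t s - t s')\<^sup>2 = 0"
    using \<open>s \<in> S\<close> \<open>s' \<in> S\<close> by blast
  then show ?thesis
    using W_pos[OF \<open>s \<in> S\<close>] W_pos[OF \<open>s' \<in> S\<close>] by simp
qed

text \<open>With weights \<open>multinomial a * multinomial b\<close>, which sum to \<open>multinomial m\<close> over the splittings
  of \<open>m\<close>, the tensor entry of \<open>f * g\<close> at \<open>m\<close> is a weighted mean of the products of entries.\<close>
lemma tensor_coeff_mult_sq_le:
  fixes f g :: "'n::finite mpoly"
  assumes hf: "homogeneous p f" and hg: "homogeneous q g" and m: "mdeg m = p + q"
  shows "multinomial m * (tensor_coeff (f * g) m)\<^sup>2 \<le> (\<Sum>(a, b)\<in>splittings p q m.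
      multinomial a * multinomial b * (tensor_coeff f a * tensor_coeff g b)\<^sup>2)"
    and "multinomial m * (tensor_coeff (f * g) m)\<^sup>2 = (\<Sum>(a, b)\<in>splittings p q m.
      multinomial a * multinomial b * (tensor_coeff f a * tensor_coeff g b)\<^sup>2) \<Longrightarrow>
      (a, b) \<in> splittings p q m \<Longrightarrow> (a', b') \<in> splittings p q m \<Longrightarrow>
      tensor_coeff f a * tensor_coeff g b = tensor_coeff f a' * tensor_coeff g b'"
proof -
  let ?S = "splittings p q m"
  let ?lhs = "multinomial m * (tensor_coeff (f * g) m)\<^sup>2"
  let ?rhs = "\<Sum>(a, b)\<in>?S. multinomial a * multinomial b * (tensor_coeff f a * tensor_coeff g b)\<^sup>2"
  define W :: "('n \<Rightarrow>\<^sub>0 nat) \<times> ('n \<Rightarrow>\<^sub>0 nat) \<Rightarrow> real"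
    where "W = (\<lambda>(a, b). multinomial a * multinomial b)"
  define t :: "('n \<Rightarrow>\<^sub>0 nat) \<times> ('n \<Rightarrow>\<^sub>0 nat) \<Rightarrow> real"
    where "t = (\<lambda>(a, b). tensor_coeff f a * tensor_coeff g b)"
  have W_pos: "W s > 0" for s
    unfolding W_def by (auto simp: multinomial_pos case_prod_unfold)
  have sum_W: "multinomial m = (\<Sum>s\<in>?S. W s)"
    unfolding W_def using multinomial_convolution[OF m] .
  have rhs: "?rhs = (\<Sum>s\<in>?S. W s * (t s)\<^sup>2)"
    unfolding W_def t_def by (simp add: case_prod_unfold)
  have "Poly_Mapping.lookup (f * g) m = (\<Sum>s\<in>?S. W s * t s)"
    unfolding lookup_mult_splittings[OF hf hg] W_def t_def lookup_eq_tensor_coeff[of f] lookup_eq_tensor_coeff[of g]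
    by (simp add: case_prod_unfold algebra_simps)
  then have lhs: "?lhs = (\<Sum>s\<in>?S. W s * t s)\<^sup>2 / (\<Sum>s\<in>?S. W s)"
    unfolding tensor_coeff_def sum_W[symmetric] using multinomial_pos[of m] by (simp add: power2_eq_square)
  have "(\<Sum>s\<in>?S. W s * t s)\<^sup>2 \<le> (\<Sum>s\<in>?S. W s) * (\<Sum>s\<in>?S. W s * (t s)\<^sup>2)"
    using W_pos by (intro weighted_Cauchy_Schwarz less_imp_le)
  then show "?lhs \<le> ?rhs"
    unfolding lhs rhs using sum_W multinomial_pos[of m] by (simp add: divide_le_eq mult.commute)
  assume "?lhs = ?rhs" and "(a, b) \<in> ?S" "(a', b') \<in> ?S"
  then have "t (a, b) = t (a', b')"
    unfolding lhs rhs using sum_W multinomial_pos[of m] W_pos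
    by (intro weighted_Cauchy_Schwarz_eq_imp_const[OF finite_splittings, where W = W]) (auto simp: divide_eq_eq mult.commute)
  then show "tensor_coeff f a * tensor_coeff g b = tensor_coeff f a' * tensor_coeff g b'"
    unfolding t_def by simp
qed

lemma hs_norm_sq_mult_sq:
  fixes f g :: "'n::finite mpoly"
  assumes "homogeneous p f" "homogeneous q g"
  shows "(hs_norm f)\<^sup>2 * (hs_norm g)\<^sup>2 = (\<Sum>m\<in>exps_of_degree (p + q). \<Sum>(a, b)\<in>splittings p q m.
      multinomial a * multinomial b * (tensor_coeff f a * tensor_coeff g b)\<^sup>2)"
proof -
  have "(hs_norm f)\<^sup>2 * (hs_norm g)\<^sup>2 = (\<Sum>(a, b)\<in>exps_of_degree p \<times> exps_of_degree q.
      multinomial a * multinomial b * (tensor_coeff f a * tensor_coeff g b)\<^sup>2)"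
    unfolding hs_norm_sq[OF assms(1)] hs_norm_sq[OF assms(2)] sum_product sum.cartesian_product
    by (simp add: power_mult_distrib algebra_simps)
  also have "\<dots> = (\<Sum>m\<in>exps_of_degree (p + q). \<Sum>(a, b)\<in>splittings p q m.
      multinomial a * multinomial b * (tensor_coeff f a * tensor_coeff g b)\<^sup>2)"
    unfolding splittings_def
    by (rule sum.group[of _ _ "\<lambda>s. fst s + snd s", symmetric])
      (auto simp: finite_exps_of_degree[unfolded exps_of_degree_def] exps_of_degree_def mdeg_add)
  finally show ?thesis .
qed

lemma hs_norm_mult_le:
  fixes f g :: "'n::finite mpoly"
  assumes "homogeneous p f" "homogeneous q g"
  shows "hs_norm (f * g) \<le> hs_norm f * hs_norm g"
proof (rule power2_le_imp_le)
  have "(hs_norm (f * g))\<^sup>2 = (\<Sum>m\<in>exps_of_degree (p + q). multinomial m * (tensor_coeff (f * g) m)\<^sup>2)"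
    using hs_norm_sq homogeneous_mult[OF assms] by blast
  also have "\<dots> \<le> (hs_norm f)\<^sup>2 * (hs_norm g)\<^sup>2"
    unfolding hs_norm_sq_mult_sq[OF assms]
    by (intro sum_mono tensor_coeff_mult_sq_le(1)[OF assms]) (simp add: exps_of_degree_def)
  also have "\<dots> = (hs_norm f * hs_norm g)\<^sup>2"
    by (simp add: power_mult_distrib)
  finally show "(hs_norm (f * g))\<^sup>2 \<le> (hs_norm f * hs_norm g)\<^sup>2" .
qed (simp add: hs_norm_nonneg)

lemma hs_norm_mult_eq_imp_exchange:
  fixes f g :: "'n::finite mpoly"
  assumes hf: "homogeneous p f" and hg: "homogeneous q g"
    and eq: "hs_norm (f * g) = hs_norm f * hs_norm g"
    and ab: "a \<in> exps_of_degree p" "b \<in> exps_of_degree q" "a' \<in> exps_of_degree p" "b' \<in> exps_of_degree q"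
    and sum_eq: "a + b = a' + b'"
  shows "tensor_coeff f a * tensor_coeff g b = tensor_coeff f a' * tensor_coeff g b'"
proof -
  let ?D = "exps_of_degree (p + q)"
  let ?lhs = "\<lambda>m. multinomial m * (tensor_coeff (f * g) m)\<^sup>2"
  let ?rhs = "\<lambda>m. \<Sum>(a, b)\<in>splittings p q m. multinomial a * multinomial b * (tensor_coeff f a * tensor_coeff g b)\<^sup>2"
  have le: "?lhs m \<le> ?rhs m" if "m \<in> ?D" for m
    using tensor_coeff_mult_sq_le(1)[OF hf hg] that by (simp add: exps_of_degree_def)
  have sums_eq: "(\<Sum>m\<in>?D. ?lhs m) = (\<Sum>m\<in>?D. ?rhs m)"
    using eq hs_norm_sq[OF homogeneous_mult[OF hf hg]] hs_norm_sq_mult_sq[OF hf hg]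
    by (simp only: power_mult_distrib)
  have lhs_eq_rhs: "?lhs m = ?rhs m" if "m \<in> ?D" for m
  proof (rule ccontr)
    assume "?lhs m \<noteq> ?rhs m"
    then have "(\<Sum>m\<in>?D. ?lhs m) < (\<Sum>m\<in>?D. ?rhs m)"
      using le that by (intro sum_strict_mono_ex1[OF finite_exps_of_degree]) (auto simp: less_le)
    then show False using sums_eq by simp
  qed
  have m: "mdeg (a + b) = p + q"
    using ab by (simp add: exps_of_degree_def mdeg_add)
  then have "?lhs (a + b) = ?rhs (a + b)"
    using lhs_eq_rhs by (simp add: exps_of_degree_def)
  moreover have "(a, b) \<in> splittings p q (a + b)" "(a', b') \<in> splittings p q (a + b)"
    using ab sum_eq by (auto simp: splittings_def)
  ultimately show ?thesis
    by (rule tensor_coeff_mult_sq_le(2)[OF hf hg m])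
qed

section \<open>The equality case\<close>

lemma exchange_imp_geometric:
  fixes \<phi> :: "('n::finite \<Rightarrow>\<^sub>0 nat) \<Rightarrow> real" and c :: "real^'n"
  assumes exchange: "\<And>a i. mdeg a + 1 = p \<Longrightarrow> \<phi> (a + unit_exp i) = c $ i * \<phi> (a + unit_exp j)"
    and cj: "c $ j = 1" and "mdeg a = p"
  shows "\<phi> a = \<phi> (Poly_Mapping.single j p) * multipow c a"
proof -
  have "\<phi> a = \<phi> (Poly_Mapping.single j p) * multipow c a" if "mdeg a = p" "p - Poly_Mapping.lookup a j = k" for a k
    using that
  proof (induction k arbitrary: a)
    case 0
    then have aj: "Poly_Mapping.lookup a j = p"
      using lookup_le_mdeg[of a j] by simp
    have "Poly_Mapping.lookup a i = 0" if "i \<noteq> j" for i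
      using mdeg_remove[of a j] 0 aj that by (simp add: sum_eq_0_iff)
    then have "a = Poly_Mapping.single j p"
      by (intro poly_mapping_eqI) (auto simp: lookup_single when_def aj)
    then show ?case using cj by (simp add: multipow_single)
  next
    case (Suc k)
    have "\<exists>i. i \<noteq> j \<and> 1 \<le> Poly_Mapping.lookup a i"
    proof (rule ccontr)
      assume "\<nexists>i. i \<noteq> j \<and> 1 \<le> Poly_Mapping.lookup a i"
      then have "mdeg a = Poly_Mapping.lookup a j"
        using mdeg_remove[of a j] by (auto simp: not_less_eq_eq)
      then show False using Suc.prems by simp
    qed
    then obtain i where i: "i \<noteq> j" "1 \<le> Poly_Mapping.lookup a i" by blast
    define a' where "a' = a - unit_exp i"
    have a: "a = a' + unit_exp i"
      unfolding a'_def using minus_unit_exp_add[OF i(2)] by simp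
    have deg: "mdeg a' + 1 = p"
      using Suc.prems(1) by (simp add: a mdeg_add)
    have "\<phi> (a' + unit_exp j) = \<phi> (Poly_Mapping.single j p) * multipow c (a' + unit_exp j)"
      using Suc.prems(2) deg i by (intro Suc.IH) (auto simp: a mdeg_add lookup_add lookup_unit_exp)
    then show ?case
      using exchange[OF deg, of i] cj by (simp add: a multipow_add)
  qed
  then show ?thesis using \<open>mdeg a = p\<close> by blast
qed

lemma geometric_tensor_coeff_imp_power_of_linear:
  fixes f :: "'n::finite mpoly"
  assumes hf: "homogeneous p f" and "f \<noteq> 0"
    and geometric: "\<And>a. a \<in> exps_of_degree p \<Longrightarrow> tensor_coeff f a = \<beta> * multipow c a"
  shows "\<beta> \<noteq> 0" and "meval f x = \<beta> * (c \<bullet> x) ^ p"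
proof -
  show "meval f x = \<beta> * (c \<bullet> x) ^ p"
    unfolding meval_eq_sum_degree[OF hf] lookup_eq_tensor_coeff multinomial_theorem[symmetric]
    by (auto simp: geometric sum_distrib_left algebra_simps intro!: sum.cong)
  show "\<beta> \<noteq> 0"
  proof
    assume "\<beta> = 0"
    then have "Poly_Mapping.lookup f a = 0" for a
    proof (cases "a \<in> exps_of_degree p")
      case True
      then show ?thesis using geometric \<open>\<beta> = 0\<close> by (simp add: lookup_eq_tensor_coeff)
    next
      case False
      then show ?thesis using hf by (auto simp: homogeneous_iff_keys in_keys_iff)
    qed
    then show False using \<open>f \<noteq> 0\<close> by (simp add: poly_mapping_eqI)
  qed
qed

text \<open>For a monomial \<open>b\<^sub>1 = b\<^sub>0 + e\<^sub>j\<close> of \<open>g\<close>, exchanging \<open>e\<^sub>i\<close> and \<open>e\<^sub>j\<close> between the two factors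
  gives \<open>\<phi>(a + e\<^sub>i) = c\<^sub>i \<phi>(a + e\<^sub>j)\<close> with \<open>c\<^sub>i = \<psi>(b\<^sub>0 + e\<^sub>i) / \<psi>(b\<^sub>1)\<close>.\<close>
lemma hs_norm_mult_eq_imp_geometric:
  fixes f g :: "'n::finite mpoly"
  assumes hf: "homogeneous p f" and hg: "homogeneous q g" and "q \<ge> 1" "g \<noteq> 0"
    and eq: "hs_norm (f * g) = hs_norm f * hs_norm g"
  obtains c :: "real^'n" and j where "c $ j = 1"
    and "\<And>a. a \<in> exps_of_degree p \<Longrightarrow> tensor_coeff f a = tensor_coeff f (Poly_Mapping.single j p) * multipow c a"
proof -
  obtain b1 where b1: "b1 \<in> Poly_Mapping.keys g"
    using \<open>g \<noteq> 0\<close> keys_eq_empty by blast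
  then have b1_deg: "mdeg b1 = q"
    using hg by (auto simp: homogeneous_def)
  have "\<exists>j. 1 \<le> Poly_Mapping.lookup b1 j"
  proof (rule ccontr)
    assume "\<nexists>j. 1 \<le> Poly_Mapping.lookup b1 j"
    then have "b1 = 0" by (intro poly_mapping_eqI) (simp add: not_less_eq_eq)
    then show False using b1_deg \<open>q \<ge> 1\<close> by simp
  qed
  then obtain j where j: "1 \<le> Poly_Mapping.lookup b1 j" by blast
  define b0 where "b0 = b1 - unit_exp j"
  have b1_eq: "b1 = b0 + unit_exp j"
    unfolding b0_def using minus_unit_exp_add[OF j] by simp
  have b0_deg: "mdeg b0 + 1 = q"
    using b1_deg by (simp add: b1_eq mdeg_add)
  have g_b1: "tensor_coeff g b1 \<noteq> 0"
    using b1 multinomial_pos[of b1] by (simp add: tensor_coeff_def in_keys_iff)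
  define c where "c = (\<chi> i. tensor_coeff g (b0 + unit_exp i) / tensor_coeff g b1)"
  have cj: "c $ j = 1"
    using g_b1 by (simp add: c_def b1_eq)
  have exchange: "tensor_coeff f (a + unit_exp i) = c $ i * tensor_coeff f (a + unit_exp j)"
    if a: "mdeg a + 1 = p" for a i
  proof -
    have "tensor_coeff f (a + unit_exp i) * tensor_coeff g (b0 + unit_exp j) =
        tensor_coeff f (a + unit_exp j) * tensor_coeff g (b0 + unit_exp i)"
    proof (rule hs_norm_mult_eq_imp_exchange[OF hf hg eq])
      show "a + unit_exp i \<in> exps_of_degree p" "a + unit_exp j \<in> exps_of_degree p"
        using a by (simp_all add: exps_of_degree_def mdeg_add)
      show "b0 + unit_exp j \<in> exps_of_degree q" "b0 + unit_exp i \<in> exps_of_degree q"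
        using b0_deg by (simp_all add: exps_of_degree_def mdeg_add)
      show "a + unit_exp i + (b0 + unit_exp j) = a + unit_exp j + (b0 + unit_exp i)"
        by (simp add: add_ac)
    qed
    then show ?thesis
      using g_b1 unfolding c_def vec_lambda_beta b1_eq by (simp add: field_simps)
  qed
  show ?thesis
    using exchange_imp_geometric[OF exchange cj] that[OF cj] by (simp add: exps_of_degree_def)
qed

lemma hs_norm_mult_eq_imp_power_of_linear:
  fixes f g :: "'n::finite mpoly"
  assumes hf: "homogeneous p f" and hg: "homogeneous q g" and "q \<ge> 1" "f \<noteq> 0" "g \<noteq> 0"
    and eq: "hs_norm (f * g) = hs_norm f * hs_norm g"
  shows "\<exists>\<beta> c. \<beta> \<noteq> 0 \<and> c \<noteq> 0 \<and> (\<forall>x. meval f x = \<beta> * (c \<bullet> x) ^ p)"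
proof -
  obtain c :: "real^'n" and j where "c $ j = 1"
    and geometric: "\<And>a. a \<in> exps_of_degree p \<Longrightarrow> tensor_coeff f a = tensor_coeff f (Poly_Mapping.single j p) * multipow c a"
    using hs_norm_mult_eq_imp_geometric[OF hf hg \<open>q \<ge> 1\<close> \<open>g \<noteq> 0\<close> eq] by blast
  then have "c \<noteq> 0" by auto
  then show ?thesis
    using geometric_tensor_coeff_imp_power_of_linear[OF hf \<open>f \<noteq> 0\<close> geometric] by blast
qed

lemma finite_real_roots_power: "k \<ge> 1 \<Longrightarrow> finite {z::real. z ^ k = C}"
proof -
  assume "k \<ge> 1"
  then have "coeff (monom 1 k - [:C:]) k = 1"
    by (cases k) auto
  then have "monom 1 k - [:C:] \<noteq> 0" by (metis coeff_0 zero_neq_one)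
  from poly_roots_finite[OF this] show ?thesis
    by (simp add: poly_monom)
qed

lemma continuous_on_meval_line: "continuous_on UNIV (\<lambda>t::real. meval f (y + t *\<^sub>R v))"
proof -
  have "(\<lambda>t. meval f (y + t *\<^sub>R v)) = (\<lambda>t. \<Sum>m\<in>Poly_Mapping.keys f.
      Poly_Mapping.lookup f m * (\<Prod>i\<in>UNIV. (y $ i + t * v $ i) ^ Poly_Mapping.lookup m i))"
    by (simp add: meval_def)
  then show ?thesis
    by (simp only:) (intro continuous_on_sum continuous_on_mult continuous_on_prod continuous_on_power
      continuous_on_add continuous_on_const continuous_on_id)
qed

text \<open>\<open>f\<close> is constant along each hyperplane \<open>c \<bullet> x = const\<close>: on a line inside it, \<open>f\<close> is continuous
  and takes values among the finitely many \<open>k\<close>-th roots of the constant value of \<open>f ^ k\<close>.\<close>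
lemma root_of_power_of_linear:
  fixes f :: "'n::finite mpoly"
  assumes hf: "homogeneous p f" and "k \<ge> 1" "\<alpha> \<noteq> 0" "c \<noteq> 0"
    and fk: "\<And>x. meval (f ^ k) x = \<alpha> * (c \<bullet> x) ^ (k * p)"
  shows "\<exists>\<beta>. \<beta> \<noteq> 0 \<and> (\<forall>x. meval f x = \<beta> * (c \<bullet> x) ^ p)"
proof -
  have power_eq: "meval f x ^ k = \<alpha> * (c \<bullet> x) ^ (k * p)" for x
    using fk by (simp add: meval_power)
  have translate: "meval f (y + v) = meval f y" if "c \<bullet> v = 0" for y v
  proof -
    define \<gamma> where "\<gamma> t = meval f (y + t *\<^sub>R v)" for t
    have "range \<gamma> \<subseteq> {z. z ^ k = \<alpha> * (c \<bullet> y) ^ (k * p)}"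
      using power_eq that by (auto simp: \<gamma>_def inner_add_right)
    then have "finite (range \<gamma>)"
      using finite_real_roots_power[OF \<open>k \<ge> 1\<close>] finite_subset by blast
    then have "\<gamma> constant_on UNIV"
      using continuous_on_meval_line unfolding \<gamma>_def by (intro continuous_finite_range_constant) auto
    then have "\<gamma> 1 = \<gamma> 0" unfolding constant_on_def by auto
    then show ?thesis unfolding \<gamma>_def by simp
  qed
  have cc: "c \<bullet> c \<noteq> 0" using \<open>c \<noteq> 0\<close> by simp
  define \<beta> where "\<beta> = meval f c / (c \<bullet> c) ^ p"
  have "meval f x = \<beta> * (c \<bullet> x) ^ p" for x
  proof -
    define s where "s = (c \<bullet> x) / (c \<bullet> c)"
    have "c \<bullet> (x - s *\<^sub>R c) = 0" unfolding s_def using cc by (simp add: inner_diff_right)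
    then have "meval f x = meval f (s *\<^sub>R c)"
      using translate[of "x - s *\<^sub>R c" "s *\<^sub>R c"] by simp
    also have "\<dots> = \<beta> * (c \<bullet> x) ^ p"
      unfolding meval_scaleR[OF hf] s_def \<beta>_def by (simp add: power_divide)
    finally show ?thesis .
  qed
  moreover have "\<beta> \<noteq> 0"
    using power_eq[of c] \<open>k \<ge> 1\<close> \<open>\<alpha> \<noteq> 0\<close> cc by (auto simp: \<beta>_def power_0_left)
  ultimately show ?thesis by blast
qed

lemma hs_norm_power_add_less:
  fixes f :: "'n::finite mpoly"
  assumes "f \<noteq> 0" "p \<ge> 1" "homogeneous p f" "k \<ge> 1" "l \<ge> 1"
    and not_power_of_linear: "\<not> (\<exists>a c. a \<noteq> 0 \<and> c \<noteq> 0 \<and> (\<forall>x. meval f x = a * (c \<bullet> x) ^ p))"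
  shows "hs_norm (f ^ (k + l)) < hs_norm (f ^ k) * hs_norm (f ^ l)"
proof -
  have hf: "homogeneous (n * p) (f ^ n)" for n
    using homogeneous_power \<open>homogeneous p f\<close> by blast
  have nonzero: "f ^ n \<noteq> 0" for n
  proof
    assume "f ^ n = 0"
    then have "meval f x = 0" for x
      using meval_power[of f n x] by (simp add: meval_zero)
    then show False using meval_all_0_imp_0 \<open>f \<noteq> 0\<close> by blast
  qed
  have "hs_norm (f ^ k * f ^ l) \<noteq> hs_norm (f ^ k) * hs_norm (f ^ l)"
  proof
    assume "hs_norm (f ^ k * f ^ l) = hs_norm (f ^ k) * hs_norm (f ^ l)"
    then obtain \<alpha> c where "\<alpha> \<noteq> 0" "c \<noteq> 0" "\<forall>x. meval (f ^ k) x = \<alpha> * (c \<bullet> x) ^ (k * p)"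
      using hs_norm_mult_eq_imp_power_of_linear[OF hf hf _ nonzero nonzero] assms(2,5) by force
    then show False
      using root_of_power_of_linear[OF \<open>homogeneous p f\<close> \<open>k \<ge> 1\<close>] not_power_of_linear by blast
  qed
  then show ?thesis
    using hs_norm_mult_le[OF hf[of k] hf[of l]] by (simp add: power_add)
qed

section \<open>The spectral norm and powers of linear forms\<close>

lemma abs_meval_le_hs_norm:
  assumes hg: "homogeneous d g" and "norm x = 1"
  shows "\<bar>meval g x\<bar> \<le> hs_norm g"
proof (rule power2_le_imp_le)
  let ?u = "\<lambda>m. sqrt (multinomial m) * tensor_coeff g m"
  let ?v = "\<lambda>m. sqrt (multinomial m) * multipow x m"
  have M: "sqrt (multinomial m) * sqrt (multinomial m) = multinomial m" for m :: "'a \<Rightarrow>\<^sub>0 nat"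
    using multinomial_pos[of m] by simp
  have "meval g x = (\<Sum>m\<in>exps_of_degree d. ?u m * ?v m)"
    unfolding meval_eq_sum_degree[OF hg] lookup_eq_tensor_coeff
    by (intro sum.cong refl) (metis M mult.commute mult.left_commute)
  also have "(\<dots>)\<^sup>2 \<le> (\<Sum>m\<in>exps_of_degree d. (?u m)\<^sup>2) * (\<Sum>m\<in>exps_of_degree d. (?v m)\<^sup>2)"
    by (rule Cauchy_Schwarz_ineq_sum)
  also have "(\<Sum>m\<in>exps_of_degree d. (?v m)\<^sup>2) = (x \<bullet> x) ^ d"
    unfolding multinomial_theorem[symmetric]
    by (intro sum.cong refl) (simp add: power_mult_distrib power2_eq_square less_imp_le[OF multinomial_pos])
  also have "(\<Sum>m\<in>exps_of_degree d. (?u m)\<^sup>2) = (hs_norm g)\<^sup>2"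
    unfolding hs_norm_sq[OF hg]
    by (intro sum.cong refl) (simp add: power_mult_distrib less_imp_le[OF multinomial_pos])
  finally show "\<bar>meval g x\<bar>\<^sup>2 \<le> (hs_norm g)\<^sup>2"
    using \<open>norm x = 1\<close> by (simp add: power2_norm_eq_inner[symmetric])
qed (rule hs_norm_nonneg)

lemma abs_meval_le_sigma_norm:
  assumes "homogeneous d g" "norm x = 1"
  shows "\<bar>meval g x\<bar> \<le> sigma_norm g"
  unfolding sigma_norm_def
  by (rule cSup_upper) (use assms abs_meval_le_hs_norm in \<open>auto intro!: bdd_aboveI[of _ "hs_norm g"]\<close>)

lemma sigma_norm_le:
  fixes g :: "'n::finite mpoly"
  assumes "\<And>x. norm x = 1 \<Longrightarrow> \<bar>meval g x\<bar> \<le> B"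
  shows "sigma_norm g \<le> B"
proof -
  have "\<exists>x::real^'n. norm x = 1"
    by (rule exI[of _ "axis undefined 1"]) simp
  then show ?thesis
    unfolding sigma_norm_def by (intro cSup_least) (use assms in auto)
qed

lemma sigma_norm_pos:
  fixes f :: "'n::finite mpoly"
  assumes hf: "homogeneous d f" and "f \<noteq> 0"
  shows "sigma_norm f > 0"
proof -
  obtain x0 where x0: "meval f x0 \<noteq> 0"
    using meval_all_0_imp_0 \<open>f \<noteq> 0\<close> by blast
  define u :: "real^'n" where "u = (if x0 = 0 then axis undefined 1 else (1 / norm x0) *\<^sub>R x0)"
  have "norm u = 1" by (simp add: u_def)
  moreover have "meval f u \<noteq> 0"
  proof (cases "x0 = 0")
    case True
    then have "meval f x0 = 0 ^ d * meval f u"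
      using meval_scaleR[OF hf, of 0 u] by simp
    then show ?thesis using x0 by auto
  next
    case False
    then show ?thesis using x0 by (simp add: u_def meval_scaleR[OF hf])
  qed
  ultimately show ?thesis
    using abs_meval_le_sigma_norm[OF hf] by (metis zero_less_abs_iff order_less_le_trans)
qed

lemma sigma_norm_nonneg:
  fixes g :: "'n::finite mpoly"
  assumes "homogeneous d g"
  shows "0 \<le> sigma_norm g"
  using abs_meval_le_sigma_norm[OF assms, of "axis undefined 1"] by (meson abs_ge_zero norm_axis_1 order_trans)

lemma sigma_norm_power_le_hs_norm:
  fixes f :: "'n::finite mpoly"
  assumes hf: "homogeneous p f" and "k \<ge> 1"
  shows "sigma_norm f ^ k \<le> hs_norm (f ^ k)"
proof -
  have "sigma_norm f \<le> root k (hs_norm (f ^ k))"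
  proof (rule sigma_norm_le)
    fix x :: "real^'n" assume "norm x = 1"
    then have "\<bar>meval f x\<bar> ^ k \<le> hs_norm (f ^ k)"
      using abs_meval_le_hs_norm[OF homogeneous_power[OF hf]] by (simp add: meval_power power_abs)
    then show "\<bar>meval f x\<bar> \<le> root k (hs_norm (f ^ k))"
      using \<open>k \<ge> 1\<close> by (metis abs_ge_zero less_le_trans real_root_le_mono real_root_power_cancel zero_less_one)
  qed
  then show ?thesis
    using sigma_norm_nonneg[OF hf] \<open>k \<ge> 1\<close> hs_norm_nonneg
    by (metis power_mono real_root_pow_pos2 zero_less_one less_le_trans)
qed

lemma lookup_const_mult:
  fixes g :: "'a mpoly"
  shows "Poly_Mapping.lookup (Poly_Mapping.single 0 a * g) m = a * Poly_Mapping.lookup g m"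
  using lookup_single_mult[of 0 a g m] by simp

lemma hs_norm_power_of_linear:
  fixes g :: "'n::finite mpoly"
  assumes "\<And>x. meval g x = a * (c \<bullet> x) ^ d"
  shows "hs_norm g = \<bar>a\<bar> * norm c ^ d"
proof (rule power2_eq_imp_eq)
  have g: "g = Poly_Mapping.single 0 a * linear_poly c ^ d"
    by (rule meval_inj) (simp add: assms meval_mult meval_single meval_power meval_linear_poly)
  have hg: "homogeneous d g"
    by (auto simp: homogeneous_def in_keys_iff g lookup_const_mult lookup_linear_poly_power split: if_splits)
  have "tensor_coeff g m = a * multipow c m" if "m \<in> exps_of_degree d" for m
    using that multinomial_pos[of m]
    by (simp add: tensor_coeff_def g lookup_const_mult lookup_linear_poly_power exps_of_degree_def)
  then have "(hs_norm g)\<^sup>2 = a\<^sup>2 * (\<Sum>m\<in>exps_of_degree d. multinomial m * multipow c m * multipow c m)"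
    unfolding hs_norm_sq[OF hg] sum_distrib_left
    by (intro sum.cong refl) (simp add: power2_eq_square)
  also have "\<dots> = a\<^sup>2 * (norm c ^ 2) ^ d"
    by (simp add: multinomial_theorem power2_norm_eq_inner)
  also have "\<dots> = (\<bar>a\<bar> * norm c ^ d)\<^sup>2"
    by (simp add: power_mult_distrib mult.commute flip: power_mult)
  finally show "(hs_norm g)\<^sup>2 = (\<bar>a\<bar> * norm c ^ d)\<^sup>2" .
qed (simp_all add: hs_norm_nonneg)

lemma sigma_norm_power_of_linear:
  assumes "c \<noteq> 0" and g: "\<And>x. meval g x = a * (c \<bullet> x) ^ d"
  shows "sigma_norm g = \<bar>a\<bar> * norm c ^ d"
  unfolding sigma_norm_def
proof (rule cSup_eq_maximum)
  define u where "u = (1 / norm c) *\<^sub>R c"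
  have "norm u = 1" "c \<bullet> u = norm c"
    using \<open>c \<noteq> 0\<close> by (simp_all add: u_def power2_norm_eq_inner[symmetric] power2_eq_square)
  then show "\<bar>a\<bar> * norm c ^ d \<in> {\<bar>meval g x\<bar> |x. norm x = 1}"
    by (auto simp: g abs_mult power_abs intro!: exI[of _ u])
next
  fix z assume "z \<in> {\<bar>meval g x\<bar> |x. norm x = 1}"
  then obtain x where x: "norm x = 1" "z = \<bar>meval g x\<bar>" by blast
  have "\<bar>c \<bullet> x\<bar> \<le> norm c"
    using Cauchy_Schwarz_ineq2[of c x] x by simp
  then show "z \<le> \<bar>a\<bar> * norm c ^ d"
    using x by (auto simp: g abs_mult power_abs intro!: mult_left_mono power_mono)
qed

section \<open>Fekete's lemma\<close>

lemma subadditive_iterate: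
  fixes a :: "nat \<Rightarrow> real"
  assumes sub: "\<And>k l. k \<ge> 1 \<Longrightarrow> l \<ge> 1 \<Longrightarrow> a (k + l) \<le> a k + a l" and "m \<ge> 1" "r \<ge> 1"
  shows "a (q * m + r) \<le> q * a m + a r"
proof (induction q)
  case (Suc q)
  have "a (Suc q * m + r) \<le> a m + a (q * m + r)"
    using sub[of m "q * m + r"] assms(2,3) by (simp add: add.assoc)
  with Suc show ?case by (simp add: algebra_simps)
qed simp

lemma subadditive_quotient_bound:
  fixes a :: "nat \<Rightarrow> real"
  assumes sub: "\<And>k l. k \<ge> 1 \<Longrightarrow> l \<ge> 1 \<Longrightarrow> a (k + l) \<le> a k + a l" and "m \<ge> 1" "n \<ge> 1"
  shows "a n / n \<le> a m / m + (\<bar>a m\<bar> + Max ((\<lambda>r. \<bar>a r\<bar>) ` {1..m})) / n"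
proof -
  define q where "q = (n - 1) div m"
  define r where "r = (n - 1) mod m + 1"
  have n: "n = q * m + r" and r: "1 \<le> r" "r \<le> m"
    using \<open>m \<ge> 1\<close> \<open>n \<ge> 1\<close> by (auto simp: q_def r_def Suc_le_eq)
  have "a r \<le> Max ((\<lambda>r. \<bar>a r\<bar>) ` {1..m})"
    using r by (intro order_trans[OF abs_ge_self Max_ge]) auto
  then have "a n \<le> q * a m + Max ((\<lambda>r. \<bar>a r\<bar>) ` {1..m})"
    using subadditive_iterate[where a = a, OF sub \<open>m \<ge> 1\<close> r(1), of q] n by simp
  moreover have "q * a m \<le> n * (a m / m) + \<bar>a m\<bar>"
  proof -
    have "q * a m - n * (a m / m) = (real q * m - n) * (a m / m)"
      using \<open>m \<ge> 1\<close> by (simp add: field_simps)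
    also have "\<dots> \<le> \<bar>real q * m - n\<bar> * \<bar>a m / m\<bar>"
      by (metis abs_ge_self abs_mult)
    also have "\<dots> \<le> m * \<bar>a m / m\<bar>"
      using n r by (intro mult_right_mono) auto
    finally show ?thesis
      using \<open>m \<ge> 1\<close> by simp
  qed
  ultimately show ?thesis
    using \<open>n \<ge> 1\<close> by (simp add: field_simps)
qed

lemma Fekete_subadditive:
  fixes a :: "nat \<Rightarrow> real"
  assumes sub: "\<And>k l. k \<ge> 1 \<Longrightarrow> l \<ge> 1 \<Longrightarrow> a (k + l) \<le> a k + a l"
    and bdd: "\<And>k. k \<ge> 1 \<Longrightarrow> B \<le> a k / k"
  shows "(\<lambda>k. a k / k) \<longlonglongrightarrow> (INF k\<in>{1..}. a k / k)"
proof (rule LIMSEQ_I)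
  fix \<epsilon> :: real assume "\<epsilon> > 0"
  let ?L = "INF k\<in>{1..}. a k / k"
  have bdd_below: "bdd_below ((\<lambda>k. a k / k) ` {1..})"
    by (auto intro!: bdd_belowI[of _ B] bdd)
  have "?L < ?L + \<epsilon> / 2" using \<open>\<epsilon> > 0\<close> by simp
  then obtain m where m: "m \<ge> 1" "a m / m < ?L + \<epsilon> / 2"
    by (subst (asm) cINF_less_iff[OF _ bdd_below]) auto
  define K where "K = \<bar>a m\<bar> + Max ((\<lambda>r. \<bar>a r\<bar>) ` {1..m})"
  obtain N :: nat where N: "N > 2 * K / \<epsilon>"
    using reals_Archimedean2 by blast
  show "\<exists>N. \<forall>n\<ge>N. norm (a n / n - ?L) < \<epsilon>"
  proof (intro exI allI impI)
    fix n assume "n \<ge> N + 1"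
    then have "2 * K / \<epsilon> < n"
      using N by linarith
    then have "K / n < \<epsilon> / 2"
      using \<open>\<epsilon> > 0\<close> \<open>n \<ge> N + 1\<close> by (simp add: field_simps)
    moreover have "a n / n \<le> a m / m + K / n"
      unfolding K_def using \<open>n \<ge> N + 1\<close> subadditive_quotient_bound[where a = a, OF sub m(1), of n] by simp
    ultimately have "a n / n < ?L + \<epsilon>"
      using m(2) by linarith
    moreover have "?L \<le> a n / n"
      using \<open>n \<ge> N + 1\<close> by (intro cINF_lower[OF bdd_below]) auto
    ultimately show "norm (a n / n - ?L) < \<epsilon>" by simp
  qed
qed

lemma strictly_subadditive_INF_less:
  fixes A :: "nat \<Rightarrow> real"
  assumes less: "\<And>k l. k \<ge> 1 \<Longrightarrow> l \<ge> 1 \<Longrightarrow> A (k + l) < A k + A l"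
    and bdd_below: "bdd_below ((\<lambda>k. A k / k) ` {1..})" and "k \<ge> 1"
  shows "(INF k\<in>{1..}. A k / k) < A k / k"
proof -
  have "A (2 * k) < 2 * A k"
    using less[OF \<open>k \<ge> 1\<close> \<open>k \<ge> 1\<close>] by (simp only: mult_2)
  then have "A (2 * k) / 2 / k < A k / k"
    using \<open>k \<ge> 1\<close> by (intro divide_strict_right_mono) simp_all
  moreover have "(INF k\<in>{1..}. A k / k) \<le> A (2 * k) / 2 / k"
    using \<open>k \<ge> 1\<close> cINF_lower[OF bdd_below, of "2 * k"] by simp
  ultimately show ?thesis
    by linarith
qed

lemma submultiplicative_root_limit:
  fixes b :: "nat \<Rightarrow> real"
  assumes "s > 0" and lower: "\<And>k. k \<ge> 1 \<Longrightarrow> s ^ k \<le> b k"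
    and submult: "\<And>k l. k \<ge> 1 \<Longrightarrow> l \<ge> 1 \<Longrightarrow> b (k + l) < b k * b l"
  shows "\<exists>\<rho>. (\<lambda>k. b k powr (1 / real k)) \<longlonglongrightarrow> \<rho> \<and> s \<le> \<rho> \<and> (\<forall>k\<ge>1. \<rho> < b k powr (1 / real k))"
proof -
  have b_pos: "b k > 0" if "k \<ge> 1" for k
    using lower[OF that] \<open>s > 0\<close> by (meson less_le_trans zero_less_power)
  define A where "A k = ln (b k)" for k
  have A_less: "A (k + l) < A k + A l" if "k \<ge> 1" "l \<ge> 1" for k l
  proof -
    have "ln (b (k + l)) < ln (b k * b l)"
      using submult[OF that] b_pos that by simp
    then show ?thesis
      using b_pos[OF that(1)] b_pos[OF that(2)] by (simp add: A_def ln_mult)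
  qed
  have A_lower: "ln s \<le> A k / k" if "k \<ge> 1" for k
  proof -
    have "ln (s ^ k) \<le> A k"
      using lower[OF that] b_pos[OF that] \<open>s > 0\<close> by (simp add: A_def)
    then show ?thesis
      using \<open>s > 0\<close> that by (simp add: ln_realpow field_simps)
  qed
  let ?L = "INF k\<in>{1..}. A k / k"
  have bdd_below: "bdd_below ((\<lambda>k. A k / k) ` {1..})"
    by (auto intro!: bdd_belowI[of _ "ln s"] A_lower)
  have root_eq: "b k powr (1 / real k) = exp (A k / k)" if "k \<ge> 1" for k
    using b_pos[OF that] by (simp add: A_def powr_def)
  have "(\<lambda>k. exp (A k / k)) \<longlonglongrightarrow> exp ?L"
    by (intro tendsto_exp Fekete_subadditive[OF less_imp_le[OF A_less] A_lower])
  moreover have "\<forall>\<^sub>F k in sequentially. exp (A k / k) = b k powr (1 / real k)"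
    using eventually_ge_at_top[of 1] by eventually_elim (simp add: root_eq)
  ultimately have limit: "(\<lambda>k. b k powr (1 / real k)) \<longlonglongrightarrow> exp ?L"
    by (rule Lim_transform_eventually)
  have "ln s \<le> ?L"
    by (rule cINF_greatest) (auto simp: A_lower)
  then have lower_limit: "s \<le> exp ?L"
    using \<open>s > 0\<close> by (metis exp_le_cancel_iff exp_ln)
  have limit_less: "exp ?L < b k powr (1 / real k)" if "k \<ge> 1" for k
    unfolding root_eq[OF that]
    by (rule exp_less_mono) (rule strictly_subadditive_INF_less[OF A_less bdd_below that])
  show ?thesis
    using limit lower_limit limit_less by blast
qed

lemma power_less_if_less_powr_inverse:
  fixes s y :: real
  assumes "0 \<le> s" "0 \<le> y" "k \<ge> 1" and less: "s < y powr (1 / real k)"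
  shows "s ^ k < y"
proof -
  have "y powr (1 / real k) = root k y"
    using assms by (simp add: root_powr_inverse)
  then have "root k (s ^ k) < root k y"
    using less assms by (simp add: real_root_power_cancel)
  then show ?thesis using \<open>k \<ge> 1\<close> by simp
qed

theorem theorem2p2:
  fixes f :: "'n::finite mpoly" and p :: nat
  assumes "f \<noteq> 0" and "p \<ge> 1" and "homogeneous p f"
  shows "(\<forall>(a::real) (c::real^'n). a \<noteq> 0 \<longrightarrow> c \<noteq> 0 \<longrightarrow> (\<forall>x. meval f x = a * (c \<bullet> x) ^ p) \<longrightarrow>
            (\<forall>k::nat. k \<ge> 1 \<longrightarrow> hs_norm (f ^ k) = \<bar>a\<bar> ^ k * norm c ^ (k * p) \<and>
                                 sigma_norm (f ^ k) = \<bar>a\<bar> ^ k * norm c ^ (k * p)))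
       \<and> (\<not> (\<exists>(a::real) (c::real^'n). a \<noteq> 0 \<and> c \<noteq> 0 \<and> (\<forall>x. meval f x = a * (c \<bullet> x) ^ p)) \<longrightarrow>
            (\<forall>k l::nat. k \<ge> 1 \<longrightarrow> l \<ge> 1 \<longrightarrow> hs_norm (f ^ (k + l)) < hs_norm (f ^ k) * hs_norm (f ^ l))
          \<and> (\<forall>k::nat. k \<ge> 1 \<longrightarrow> hs_norm (f ^ (2 * k)) < (hs_norm (f ^ k))\<^sup>2)
          \<and> (\<forall>k::nat. k \<ge> 1 \<longrightarrow> sigma_norm f ^ k < hs_norm (f ^ k))
          \<and> (\<exists>\<rho>::real. (\<lambda>k. hs_norm (f ^ k) powr (1 / real k)) \<longlonglongrightarrow> \<rho>
                \<and> \<rho> \<ge> sigma_norm f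
                \<and> (\<forall>k::nat. k \<ge> 1 \<longrightarrow> \<rho> < hs_norm (f ^ k) powr (1 / real k))))"
proof (intro conjI allI impI)
  fix a :: real and c :: "real^'n" and k :: nat
  assume "c \<noteq> 0" and "\<forall>x. meval f x = a * (c \<bullet> x) ^ p"
  then have fk: "meval (f ^ k) x = a ^ k * (c \<bullet> x) ^ (k * p)" for x
    by (simp add: meval_power power_mult_distrib mult.commute[of k] power_mult)
  show "hs_norm (f ^ k) = \<bar>a\<bar> ^ k * norm c ^ (k * p)"
    using hs_norm_power_of_linear[OF fk] by (simp add: power_abs)
  show "sigma_norm (f ^ k) = \<bar>a\<bar> ^ k * norm c ^ (k * p)"
    using sigma_norm_power_of_linear[OF \<open>c \<noteq> 0\<close> fk] by (simp add: power_abs)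
next
  assume not_power: "\<not> (\<exists>a c. a \<noteq> 0 \<and> c \<noteq> 0 \<and> (\<forall>x. meval f x = a * (c \<bullet> x) ^ p))"
  show submult: "hs_norm (f ^ (k + l)) < hs_norm (f ^ k) * hs_norm (f ^ l)" if "k \<ge> 1" "l \<ge> 1" for k l
    using hs_norm_power_add_less[OF assms that not_power] .
  show "hs_norm (f ^ (2 * k)) < (hs_norm (f ^ k))\<^sup>2" if "k \<ge> 1" for k
    using submult[OF that that] by (simp add: mult_2 power2_eq_square)
  obtain \<rho> where \<rho>: "(\<lambda>k. hs_norm (f ^ k) powr (1 / real k)) \<longlonglongrightarrow> \<rho>" "sigma_norm f \<le> \<rho>"
      "\<And>k. k \<ge> 1 \<Longrightarrow> \<rho> < hs_norm (f ^ k) powr (1 / real k)"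
    using submultiplicative_root_limit[OF sigma_norm_pos[OF assms(3,1)]
        sigma_norm_power_le_hs_norm[OF assms(3)] submult] by blast
  then show "\<exists>\<rho>. (\<lambda>k. hs_norm (f ^ k) powr (1 / real k)) \<longlonglongrightarrow> \<rho> \<and> \<rho> \<ge> sigma_norm f
      \<and> (\<forall>k\<ge>1. \<rho> < hs_norm (f ^ k) powr (1 / real k))"
    by blast
  show "sigma_norm f ^ k < hs_norm (f ^ k)" if "k \<ge> 1" for k
    using \<rho>(2) \<rho>(3)[OF that] sigma_norm_pos[OF assms(3,1)] hs_norm_nonneg that
    by (intro power_less_if_less_powr_inverse) auto
qed

end
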